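(* Let $(x_t)_{t\ge 0}$ be a Markov process on a state space $\mathcal{X}$, let $p$ be the marginal distribution of states (the same for every time index), and let $p_{t+}(\cdot \mid x_0) = (1-\gamma)\sum_{t=0}^\infty \gamma^t p_t(\cdot \mid x_0)$ be the $\gamma$-discounted state occupancy measure, where $p_t(\cdot\mid x_0)$ is the distribution of $x_t$ given $x_0$. Let $\psi:\mathcal{X}\to\mathbb{R}^k$ be an encoder, $A\in\mathbb{R}^{k\times k}$, and $c>0$. Assume: (i) if $x\sim p$, then $\psi(x)\sim\mathcal{N}(0, c\, I)$; (ii) there is a constant $C>0$ such that for all $x_0, x$, $e^{-\frac12\|A\psi(x_0)-\psi(x)\|_2^2} = \frac{p_{t+}(x_{t+}=x\mid x_0)}{p(x)\,C}.$ Let $x_0\sim p$, $x_{t+}\sim p_{t+}(\cdot\mid x_0)$, $\psi_0=\psi(x_0)$, $\psi_{t+}=\psi(x_{t+})$. Then the conditional distribution of $\psi_{t+}$ given $\psi_0$ is $p(\psi_{t+}=\psi\mid \psi_0) = \mathcal{N}\!\left(\psi;\ \mu=\tfrac{c}{c+1}A\psi_0,\ \Sigma=\tfrac{c}{c+1}I\right).$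
   Context: The encoder $\psi$ and matrix $A$ arise from temporal contrastive learning in which the encoder applied to the earlier state is $\phi(x)=A\psi(x)$; hypotheses (i) and (ii) are the paper's two modeling assumptions (Gaussian marginal of representations, and the learned critic encoding the probability ratio of the discounted occupancy to the marginal). Densities are with respect to a common base measure. *)

theory Defs
  imports "HOL-Probability.Probability"
begin

definition iso_gauss_density :: "real ^ 'k \<Rightarrow> real \<Rightarrow> real ^ 'k \<Rightarrow> real" where
  "iso_gauss_density m s v =
     (2 * pi * s) powr (- real CARD('k) / 2) * exp (- (norm (v - m))\<^sup>2 / (2 * s))"

end

theory Submission
  imports Defs
begin

text \<open>
  By (ii), the conditional density of \<open>x\<close> given \<open>x\<^sub>0\<close> is \<open>p(x)\<close> times
  \<open>K \<cdot> N(A\<psi>(x\<^sub>0); \<psi>(x), I)\<close> for a constant \<open>K\<close>: a Gaussian likelihood of the observation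
  \<open>A\<psi>(x\<^sub>0)\<close> given the latent \<open>\<psi>(x)\<close>, whose prior is \<open>N(0, c I)\<close> by (i).
  Gaussian conjugacy factors prior times likelihood as the evidence \<open>N(A\<psi>(x\<^sub>0); 0, (c+1) I)\<close>
  times the posterior \<open>N(\<psi>(x); c/(c+1) A\<psi>(x\<^sub>0), c/(c+1) I)\<close>. Since the conditional density
  integrates to one, \<open>K\<close> times the evidence is one, so the conditional density is \<open>p(x)\<close> times
  posterior over prior, both evaluated at \<open>\<psi>(x)\<close>. Pushing the joint density forward along
  \<open>\<psi> \<times> \<psi>\<close> replaces each \<open>p\<close> by the prior density, which leaves prior times posterior.
\<close>

lemma borel_measurable_matrix_vector_mult [measurable]:
  fixes A :: "real ^ 'n ^ 'm"
  shows "(\<lambda>u. A *v u) \<in> borel_measurable borel"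
  by (intro borel_measurable_continuous_onI matrix_vector_mult_linear_continuous_on)

lemma norm_power2_eq_sum_Basis:
  fixes y :: "'a::euclidean_space"
  shows "(norm y)\<^sup>2 = (\<Sum>b\<in>Basis. (y \<bullet> b)\<^sup>2)"
  unfolding power2_norm_eq_inner by (subst euclidean_inner [of y y]) (simp add: power2_eq_square)

lemma completing_the_square:
  fixes v w :: "'a::real_inner"
  assumes "0 < a" "0 < b"
  shows "(norm v)\<^sup>2 / a + (norm (w - v))\<^sup>2 / b
       = (norm w)\<^sup>2 / (a + b) + (norm (v - (a / (a + b)) *\<^sub>R w))\<^sup>2 / (a * b / (a + b))"
proof -
  have "P / a + (Q - 2 * R + P) / b
      = Q / (a + b) + (P - 2 * (a / (a + b)) * R + (a / (a + b))\<^sup>2 * Q) / (a * b / (a + b))"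
    for P Q R :: real
    using assms by (simp add: divide_simps power_divide add_pos_pos) (simp add: algebra_simps power2_eq_square)
  then show ?thesis
    unfolding power2_norm_eq_inner
    by (simp add: inner_diff_left inner_diff_right inner_commute power2_eq_square algebra_simps)
qed

lemma density_cong_on_space:
  assumes "\<And>x. x \<in> space M \<Longrightarrow> f x = g x"
  shows "density M f = density M g"
  unfolding density_def using assms by (simp cong: nn_integral_cong)

lemma nn_integral_marginal_density:
  assumes [measurable]: "\<psi> \<in> M \<rightarrow>\<^sub>M N" "p \<in> borel_measurable M" "f \<in> borel_measurable N"
    "h \<in> borel_measurable N"
    and marginal: "distr (density M p) N \<psi> = density N f"
  shows "(\<integral>\<^sup>+ x. p x * h (\<psi> x) \<partial>M) = (\<integral>\<^sup>+ v. f v * h v \<partial>N)"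
proof -
  have "(\<integral>\<^sup>+ x. p x * h (\<psi> x) \<partial>M) = (\<integral>\<^sup>+ v. h v \<partial>distr (density M p) N \<psi>)"
    by (simp add: nn_integral_density nn_integral_distr)
  also have "\<dots> = (\<integral>\<^sup>+ v. f v * h v \<partial>N)"
    by (simp add: marginal nn_integral_density)
  finally show ?thesis .
qed

lemma distr_pair_density_kernel:
  assumes M: "sigma_finite_measure M" and N: "sigma_finite_measure N"
    and fin: "finite_measure (density M p)"
    and [measurable]: "\<psi> \<in> M \<rightarrow>\<^sub>M N" "p \<in> borel_measurable M" "f \<in> borel_measurable N"
      "g \<in> borel_measurable (N \<Otimes>\<^sub>M N)"
    and marginal: "distr (density M p) N \<psi> = density N f"
  shows "distr (density (M \<Otimes>\<^sub>M M) (\<lambda>(x, y). p x * p y * g (\<psi> x, \<psi> y))) (N \<Otimes>\<^sub>M N)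
           (\<lambda>(x, y). (\<psi> x, \<psi> y))
       = density (N \<Otimes>\<^sub>M N) (\<lambda>(u, v). f u * f v * g (u, v))"
proof -
  let ?\<Psi> = "\<lambda>(x, y). (\<psi> x, \<psi> y)"
  have [measurable]: "?\<Psi> \<in> M \<Otimes>\<^sub>M M \<rightarrow>\<^sub>M N \<Otimes>\<^sub>M N"
    by measurable
  have fin_marginal: "finite_measure (density N f)"
    unfolding marginal [symmetric] by (intro finite_measure.finite_measure_distr fin) simp
  have "density (M \<Otimes>\<^sub>M M) (\<lambda>(x, y). p x * p y * g (\<psi> x, \<psi> y))
      = density (density (M \<Otimes>\<^sub>M M) (\<lambda>(x, y). p x * p y)) (\<lambda>z. g (?\<Psi> z))"
    by (subst density_density_eq) (auto simp: split_beta')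
  also have "density (M \<Otimes>\<^sub>M M) (\<lambda>(x, y). p x * p y) = density M p \<Otimes>\<^sub>M density M p"
    using M fin by (intro pair_measure_density [symmetric]) (auto intro: finite_measure.axioms)
  finally have "distr (density (M \<Otimes>\<^sub>M M) (\<lambda>(x, y). p x * p y * g (\<psi> x, \<psi> y))) (N \<Otimes>\<^sub>M N) ?\<Psi>
      = density (distr (density M p \<Otimes>\<^sub>M density M p) (N \<Otimes>\<^sub>M N) ?\<Psi>) g"
    by (simp add: density_distr)
  also have "distr (density M p \<Otimes>\<^sub>M density M p) (N \<Otimes>\<^sub>M N) ?\<Psi> = density N f \<Otimes>\<^sub>M density N f"
    unfolding marginal [symmetric]
    by (intro pair_measure_distr [symmetric]) (auto simp: marginal intro: finite_measure.axioms fin_marginal)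
  also have "\<dots> = density (N \<Otimes>\<^sub>M N) (\<lambda>(u, v). f u * f v)"
    using N fin_marginal by (intro pair_measure_density) (auto intro: finite_measure.axioms)
  finally show ?thesis
    by (simp add: density_density_eq split_beta')
qed

lemma distr_pair_density_of_ratio:
  fixes p :: "'a \<Rightarrow> real" and f :: "'b \<Rightarrow> real" and k :: "'b \<Rightarrow> 'b \<Rightarrow> real"
  assumes M: "sigma_finite_measure M" and N: "sigma_finite_measure N"
    and fin: "finite_measure (density M (\<lambda>x. ennreal (p x)))"
    and [measurable]: "\<psi> \<in> M \<rightarrow>\<^sub>M N" "p \<in> borel_measurable M" "f \<in> borel_measurable N"
      "(\<lambda>(u, v). k u v) \<in> borel_measurable (N \<Otimes>\<^sub>M N)"
    and p_nonneg: "\<forall>x\<in>space M. 0 \<le> p x" and f_pos: "\<forall>v\<in>space N. 0 < f v"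
    and k_nonneg: "\<forall>u v. 0 \<le> k u v"
    and marginal: "distr (density M (\<lambda>x. ennreal (p x))) N \<psi> = density N (\<lambda>v. ennreal (f v))"
    and ratio: "\<forall>x0\<in>space M. \<forall>x\<in>space M. q x0 x = p x * k (\<psi> x0) (\<psi> x) / f (\<psi> x)"
  shows "distr (density (M \<Otimes>\<^sub>M M) (\<lambda>(x0, x). ennreal (p x0 * q x0 x))) (N \<Otimes>\<^sub>M N)
           (\<lambda>(x0, x). (\<psi> x0, \<psi> x))
       = density (N \<Otimes>\<^sub>M N) (\<lambda>(u, v). ennreal (f u * k u v))"
proof -
  define g where "g = (\<lambda>(u, v). ennreal (k u v / f v))"
  have [measurable]: "g \<in> borel_measurable (N \<Otimes>\<^sub>M N)"
    unfolding g_def by measurable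
  have joint: "ennreal (p x0 * q x0 x) = ennreal (p x0) * ennreal (p x) * g (\<psi> x0, \<psi> x)"
    if x0: "x0 \<in> space M" and x: "x \<in> space M" for x0 x
  proof -
    have "0 < f (\<psi> x)"
      using f_pos measurable_space [OF \<open>\<psi> \<in> M \<rightarrow>\<^sub>M N\<close> x] by simp
    then have nonneg: "0 \<le> p x0" "0 \<le> p x" "0 \<le> k (\<psi> x0) (\<psi> x) / f (\<psi> x)"
      using p_nonneg k_nonneg x0 x by simp_all
    have "p x0 * q x0 x = p x0 * (p x * (k (\<psi> x0) (\<psi> x) / f (\<psi> x)))"
      using ratio x0 x by simp
    then show ?thesis
      by (simp only: g_def case_prod_conv mult.assoc
          ennreal_mult [OF nonneg(1) mult_nonneg_nonneg [OF nonneg(2,3)]] ennreal_mult [OF nonneg(2,3)])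
  qed
  have pushed: "ennreal (f u) * ennreal (f v) * g (u, v) = ennreal (f u * k u v)"
    if "u \<in> space N" "v \<in> space N" for u v
  proof -
    have "0 < f u" "0 < f v"
      using f_pos that by simp_all
    then have nonneg: "0 \<le> f u" "0 \<le> f v" "0 \<le> k u v / f v"
      using k_nonneg by simp_all
    have "f u * f v * (k u v / f v) = f u * k u v"
      using \<open>0 < f v\<close> by simp
    then show ?thesis
      by (simp only: g_def case_prod_conv
          ennreal_mult [OF mult_nonneg_nonneg [OF nonneg(1,2)] nonneg(3), symmetric]
          ennreal_mult [OF nonneg(1,2), symmetric])
  qed
  have "density (M \<Otimes>\<^sub>M M) (\<lambda>(x0, x). ennreal (p x0 * q x0 x))
      = density (M \<Otimes>\<^sub>M M) (\<lambda>(x0, x). ennreal (p x0) * ennreal (p x) * g (\<psi> x0, \<psi> x))"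
    by (rule density_cong_on_space) (auto simp: space_pair_measure joint)
  also have "distr \<dots> (N \<Otimes>\<^sub>M N) (\<lambda>(x0, x). (\<psi> x0, \<psi> x))
      = density (N \<Otimes>\<^sub>M N) (\<lambda>(u, v). ennreal (f u) * ennreal (f v) * g (u, v))"
    using distr_pair_density_kernel [OF M N fin _ _ _ _ marginal] by measurable
  also have "\<dots> = density (N \<Otimes>\<^sub>M N) (\<lambda>(u, v). ennreal (f u * k u v))"
    by (rule density_cong_on_space) (auto simp: space_pair_measure pushed)
  finally show ?thesis .
qed

lemma iso_gauss_density_nonneg: "0 \<le> iso_gauss_density m s v"
  by (simp add: iso_gauss_density_def)

lemma iso_gauss_density_pos: "0 < s \<Longrightarrow> 0 < iso_gauss_density m s v"
  by (simp add: iso_gauss_density_def)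

lemma borel_measurable_iso_gauss_density [measurable]:
  assumes [measurable]: "m \<in> borel_measurable M" "v \<in> borel_measurable M"
  shows "(\<lambda>x. iso_gauss_density (m x) s (v x)) \<in> borel_measurable M"
  unfolding iso_gauss_density_def by measurable

lemma iso_gauss_density_eq_prod_normal_density:
  fixes m x :: "real ^ 'k"
  assumes "0 < s"
  shows "iso_gauss_density m s x = (\<Prod>b\<in>Basis. normal_density (m \<bullet> b) (sqrt s) (x \<bullet> b))"
proof -
  have normalizer: "(1 / sqrt (2 * pi * s)) ^ CARD('k) = (2 * pi * s) powr (- real CARD('k) / 2)"
    using assms by (simp add: powr_half_sqrt [symmetric] powr_realpow [symmetric] powr_powr
        powr_divide powr_minus_divide)
  have "(\<Prod>b\<in>Basis. normal_density (m \<bullet> b) (sqrt s) (x \<bullet> b))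
      = (\<Prod>b\<in>(Basis :: (real ^ 'k) set). 1 / sqrt (2 * pi * s) * exp (- ((x - m) \<bullet> b)\<^sup>2 / (2 * s)))"
    using assms by (simp add: normal_density_def inner_diff_left)
  also have "\<dots> = (1 / sqrt (2 * pi * s)) ^ card (Basis :: (real ^ 'k) set)
      * exp (- (\<Sum>b\<in>Basis. ((x - m) \<bullet> b)\<^sup>2) / (2 * s))"
    by (simp only: prod.distrib prod_constant sum_negf [symmetric] sum_divide_distrib exp_sum finite_Basis)
  also have "\<dots> = (2 * pi * s) powr (- real CARD('k) / 2) * exp (- (norm (x - m))\<^sup>2 / (2 * s))"
    by (simp only: norm_power2_eq_sum_Basis normalizer DIM_cart DIM_real mult_1_right)
  finally show ?thesis
    by (simp only: iso_gauss_density_def)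
qed

lemma nn_integral_iso_gauss_density:
  fixes m :: "real ^ 'k"
  assumes "0 < s"
  shows "(\<integral>\<^sup>+ x. ennreal (iso_gauss_density m s x) \<partial>lborel) = 1"
proof -
  have normal: "(\<integral>\<^sup>+ x. ennreal (normal_density \<mu> \<sigma> x) \<partial>lborel) = 1" if "0 < \<sigma>" for \<mu> \<sigma>
    using prob_space.emeasure_space_1 [OF prob_space_normal_density [OF that]]
    by (simp add: emeasure_density)
  have "(\<integral>\<^sup>+ x. ennreal (iso_gauss_density m s x) \<partial>lborel)
      = (\<integral>\<^sup>+ x. (\<Prod>b\<in>Basis. ennreal (normal_density (m \<bullet> b) (sqrt s) (x \<bullet> b))) \<partial>lborel)"
    using assms by (simp add: iso_gauss_density_eq_prod_normal_density prod_ennreal)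
  also have "\<dots> = (\<Prod>b\<in>(Basis :: (real ^ 'k) set). 1)"
    using assms by (subst nn_integral_lborel_prod) (simp_all add: normal)
  finally show ?thesis by simp
qed

lemma iso_gauss_density_conjugate:
  fixes v w :: "real ^ 'k"
  assumes a: "0 < a" and b: "0 < b"
  shows "iso_gauss_density 0 a v * iso_gauss_density v b w
       = iso_gauss_density 0 (a + b) w * iso_gauss_density ((a / (a + b)) *\<^sub>R w) (a * b / (a + b)) v"
proof -
  let ?e = "- real CARD('k) / 2"
  have normalizer: "(2 * pi * a) powr ?e * (2 * pi * b) powr ?e
      = (2 * pi * (a + b)) powr ?e * (2 * pi * (a * b / (a + b))) powr ?e"
  proof -
    have "(2 * pi * a) powr ?e * (2 * pi * b) powr ?e = ((2 * pi * a) * (2 * pi * b)) powr ?e"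
      using a b by (subst powr_mult) auto
    also have "(2 * pi * a) * (2 * pi * b) = (2 * pi * (a + b)) * (2 * pi * (a * b / (a + b)))"
      using a b by (simp add: field_simps)
    also have "(\<dots>) powr ?e = (2 * pi * (a + b)) powr ?e * (2 * pi * (a * b / (a + b))) powr ?e"
      using a b by (subst powr_mult) auto
    finally show ?thesis .
  qed
  have halve: "- X / (2 * d) + - Y / (2 * e) = - (X / d + Y / e) / 2" for X Y d e :: real
    by (simp add: add_divide_distrib)
  have "- (norm v)\<^sup>2 / (2 * a) + - (norm (w - v))\<^sup>2 / (2 * b)
      = - (norm w)\<^sup>2 / (2 * (a + b)) + - (norm (v - (a / (a + b)) *\<^sub>R w))\<^sup>2 / (2 * (a * b / (a + b)))"
    by (simp only: halve completing_the_square [OF a b])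
  then show ?thesis
    using normalizer unfolding iso_gauss_density_def
    by (simp add: exp_add [symmetric] algebra_simps)
qed

lemma gauss_likelihood_eq_posterior_ratio:
  fixes \<psi> :: "'a \<Rightarrow> real ^ 'k"
  assumes [measurable]: "\<psi> \<in> M \<rightarrow>\<^sub>M borel" "p \<in> borel_measurable M"
    and c: "0 < c" and K: "0 \<le> K" and p_nonneg: "\<forall>x\<in>space M. 0 \<le> p x"
    and marginal: "distr (density M (\<lambda>x. ennreal (p x))) lborel \<psi>
                     = density lborel (\<lambda>v. ennreal (iso_gauss_density 0 c v))"
    and r: "\<forall>x\<in>space M. r x = p x * (K * iso_gauss_density (\<psi> x) 1 w)"
    and normalized: "(\<integral>\<^sup>+ x. ennreal (r x) \<partial>M) = 1"
  shows "K * iso_gauss_density v 1 w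
       = iso_gauss_density ((c / (c + 1)) *\<^sub>R w) (c / (c + 1)) v / iso_gauss_density 0 c v"
proof -
  have conjugate: "iso_gauss_density 0 c v * iso_gauss_density v 1 w
      = iso_gauss_density 0 (c + 1) w * iso_gauss_density ((c / (c + 1)) *\<^sub>R w) (c / (c + 1)) v" for v
    using iso_gauss_density_conjugate [OF c zero_less_one] by simp
  have "1 = (\<integral>\<^sup>+ x. ennreal (p x) * ennreal (K * iso_gauss_density (\<psi> x) 1 w) \<partial>M)"
    unfolding normalized [symmetric]
    using r p_nonneg K by (intro nn_integral_cong) (simp add: ennreal_mult iso_gauss_density_nonneg)
  also have "\<dots> = (\<integral>\<^sup>+ v. ennreal (iso_gauss_density 0 c v) * ennreal (K * iso_gauss_density v 1 w) \<partial>lborel)"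
    by (rule nn_integral_marginal_density [OF _ _ _ _ marginal]) simp_all
  also have "\<dots> = (\<integral>\<^sup>+ v. ennreal (K * iso_gauss_density 0 (c + 1) w)
                     * ennreal (iso_gauss_density ((c / (c + 1)) *\<^sub>R w) (c / (c + 1)) v) \<partial>lborel)"
  proof (rule nn_integral_cong)
    fix v :: "real ^ 'k"
    have "iso_gauss_density 0 c v * (K * iso_gauss_density v 1 w)
        = K * iso_gauss_density 0 (c + 1) w * iso_gauss_density ((c / (c + 1)) *\<^sub>R w) (c / (c + 1)) v"
      by (simp only: mult.left_commute [of "iso_gauss_density 0 c v"] conjugate mult.assoc)
    then show "ennreal (iso_gauss_density 0 c v) * ennreal (K * iso_gauss_density v 1 w)
        = ennreal (K * iso_gauss_density 0 (c + 1) w)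
          * ennreal (iso_gauss_density ((c / (c + 1)) *\<^sub>R w) (c / (c + 1)) v)"
      using K by (simp add: ennreal_mult [symmetric] iso_gauss_density_nonneg)
  qed
  also have "\<dots> = ennreal (K * iso_gauss_density 0 (c + 1) w)"
    using c by (simp add: nn_integral_cmult nn_integral_iso_gauss_density)
  finally have evidence: "K * iso_gauss_density 0 (c + 1) w = 1"
    using K by (simp add: iso_gauss_density_nonneg)
  show ?thesis
    using conjugate [of v] evidence iso_gauss_density_pos [OF c, of 0 v]
    by (simp add: field_simps)
qed

theorem lemma1:
  fixes \<mu> :: "'a measure"
    and p :: "'a \<Rightarrow> real"
    and q :: "'a \<Rightarrow> 'a \<Rightarrow> real"
    and \<psi> :: "'a \<Rightarrow> real ^ 'k"
    and A :: "real ^ 'k ^ 'k"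
    and c C :: real
  assumes sf: "sigma_finite_measure \<mu>"
    and p_meas: "p \<in> borel_measurable \<mu>"
    and p_nonneg: "\<forall>x\<in>space \<mu>. 0 \<le> p x"
    and p_prob: "(\<integral>\<^sup>+ x. ennreal (p x) \<partial>\<mu>) = 1"
    and q_meas: "(\<lambda>(x0, x). q x0 x) \<in> borel_measurable (\<mu> \<Otimes>\<^sub>M \<mu>)"
    and q_nonneg: "\<forall>x0\<in>space \<mu>. \<forall>x\<in>space \<mu>. 0 \<le> q x0 x"
    and q_prob: "\<forall>x0\<in>space \<mu>. (\<integral>\<^sup>+ x. ennreal (q x0 x) \<partial>\<mu>) = 1"
    and psi_meas: "\<psi> \<in> \<mu> \<rightarrow>\<^sub>M borel"
    and c_pos: "c > 0"
    and gauss_marg: "distr (density \<mu> (\<lambda>x. ennreal (p x))) lborel \<psi>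
                       = density lborel (\<lambda>v. ennreal (iso_gauss_density 0 c v))"
    and C_pos: "C > 0"
    and critic: "\<forall>x0\<in>space \<mu>. \<forall>x\<in>space \<mu>.
                   exp (- (1/2) * (norm (A *v \<psi> x0 - \<psi> x))\<^sup>2) = q x0 x / (p x * C)"
  shows "distr (density (\<mu> \<Otimes>\<^sub>M \<mu>) (\<lambda>(x0, x). ennreal (p x0 * q x0 x)))
               (lborel \<Otimes>\<^sub>M lborel) (\<lambda>(x0, x). (\<psi> x0, \<psi> x))
         = density (lborel \<Otimes>\<^sub>M lborel)
             (\<lambda>(u, v). ennreal (iso_gauss_density 0 c u *
                 iso_gauss_density ((c / (c + 1)) *\<^sub>R (A *v u)) (c / (c + 1)) v))"
proof -
  define K where "K = C / (2 * pi) powr (- real CARD('k) / 2)"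
  have K: "0 \<le> K"
    using C_pos by (simp add: K_def)
  have p_pos: "0 < p x" if "x \<in> space \<mu>" for x
    using critic p_nonneg that C_pos
    by (metis exp_gt_zero divide_eq_0_iff less_eq_real_def mult_zero_left)
  have likelihood: "q x0 x = p x * (K * iso_gauss_density (\<psi> x) 1 (A *v \<psi> x0))"
    if "x0 \<in> space \<mu>" "x \<in> space \<mu>" for x0 x
    using critic that p_pos [OF that(2)] C_pos
    by (auto simp: K_def iso_gauss_density_def norm_minus_commute field_simps)
  have posterior_ratio: "K * iso_gauss_density v 1 (A *v \<psi> x0)
      = iso_gauss_density ((c / (c + 1)) *\<^sub>R (A *v \<psi> x0)) (c / (c + 1)) v / iso_gauss_density 0 c v"
    if "x0 \<in> space \<mu>" for x0 v
    by (rule gauss_likelihood_eq_posterior_ratio [OF psi_meas p_meas c_pos K p_nonneg gauss_marg,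
          where r = "q x0"]) (use that likelihood q_prob in auto)
  have "finite_measure (density \<mu> (\<lambda>x. ennreal (p x)))"
    using p_prob p_meas by (intro finite_measureI) (simp add: emeasure_density)
  then show ?thesis
    using psi_meas c_pos
    by (intro distr_pair_density_of_ratio [OF sf lborel.sigma_finite_measure_axioms _ _ p_meas _ _
          p_nonneg _ _ gauss_marg])
      (simp_all add: likelihood posterior_ratio iso_gauss_density_pos iso_gauss_density_nonneg)
qed

end
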